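(* Let $\mathcal{H}$ be a complex Hilbert space of $\mathbb{C}^n$-valued functions. Let $D$ be a selfadjoint operator on $\mathcal{H}$ with domain $\mathcal{D}_0$. Let $W_L,W_R$ be bounded selfadjoint operators on $\mathcal{H}$ such that: - $W_LW_R=W_RW_L$; - $W_L^{-1}$ and $W_R^{-1}$ exist and are bounded; - $W_RW_L^{-1}$ is selfadjoint; - $W_RW_L^{-1}\ge c\,\mathrm{id}$ for some $c>0$. Let $M=W_L\,D\,W_R$ with domain $\mathcal{D}_R:=W_R^{-1}\mathcal{D}_0$. Assume that complex conjugation $(C\Psi)(x)=\overline{\Psi(x)}$ satisfies $C\mathcal{D}_R=\mathcal{D}_R$ and $CMC=-M$. Then $M$ is a closed operator on $\mathcal{H}$. *)

theory Defs
  imports "HOL-Analysis.Analysis"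
begin

text \<open>A complex Hilbert space is modelled through its realification: a real Hilbert
space 'h (class real_inner + complete_space) together with an orthogonal complex
structure J (multiplication by the imaginary unit).  The real inner product is the
real part of the complex inner product; the complex inner product is recovered
by cinner below (conjugate-linear in the first argument).\<close>

definition complex_structure :: "('h::real_inner \<Rightarrow> 'h) \<Rightarrow> bool" where
  "complex_structure J \<longleftrightarrow> linear J \<and> (\<forall>x. J (J x) = - x) \<and>
     (\<forall>x y. inner (J x) (J y) = inner x y)"

definition cinner :: "('h::real_inner \<Rightarrow> 'h) \<Rightarrow> 'h \<Rightarrow> 'h \<Rightarrow> complex" where
  "cinner J x y = Complex (inner x y) (inner (J x) y)"

definition complex_subspace :: "('h::real_inner \<Rightarrow> 'h) \<Rightarrow> 'h set \<Rightarrow> bool" where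
  "complex_subspace J S \<longleftrightarrow> subspace S \<and> (\<forall>x\<in>S. J x \<in> S)"

definition clinear_on :: "('h::real_inner \<Rightarrow> 'h) \<Rightarrow> 'h set \<Rightarrow> ('h \<Rightarrow> 'h) \<Rightarrow> bool" where
  "clinear_on J S T \<longleftrightarrow> complex_subspace J S \<and>
     (\<forall>x\<in>S. \<forall>y\<in>S. T (x + y) = T x + T y) \<and>
     (\<forall>a::real. \<forall>x\<in>S. T (a *\<^sub>R x) = a *\<^sub>R T x) \<and>
     (\<forall>x\<in>S. T (J x) = J (T x))"

text \<open>Selfadjoint (possibly unbounded) operator T with domain S: densely defined,
complex linear, and T equals its adjoint T*, i.e. y is in the domain of T* with
T* y = z exactly when y is in S and z = T y.\<close>

definition selfadjoint_op :: "('h::real_inner \<Rightarrow> 'h) \<Rightarrow> 'h set \<Rightarrow> ('h \<Rightarrow> 'h) \<Rightarrow> bool" where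
  "selfadjoint_op J S T \<longleftrightarrow> clinear_on J S T \<and> closure S = UNIV \<and>
     (\<forall>y z. (\<forall>x\<in>S. cinner J (T x) y = cinner J x z) \<longleftrightarrow> (y \<in> S \<and> z = T y))"

definition bounded_clinear :: "('h::real_normed_vector \<Rightarrow> 'h) \<Rightarrow> ('h \<Rightarrow> 'h) \<Rightarrow> bool" where
  "bounded_clinear J T \<longleftrightarrow> bounded_linear T \<and> (\<forall>x. T (J x) = J (T x))"

definition bounded_selfadjoint :: "('h::real_inner \<Rightarrow> 'h) \<Rightarrow> ('h \<Rightarrow> 'h) \<Rightarrow> bool" where
  "bounded_selfadjoint J T \<longleftrightarrow> bounded_clinear J T \<and>
     (\<forall>x y. cinner J (T x) y = cinner J x (T y))"

definition conjugation :: "('h::real_inner \<Rightarrow> 'h) \<Rightarrow> ('h \<Rightarrow> 'h) \<Rightarrow> bool" where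
  "conjugation J C \<longleftrightarrow> linear C \<and> (\<forall>x. C (J x) = - J (C x)) \<and> (\<forall>x. C (C x) = x) \<and>
     (\<forall>x y. inner (C x) (C y) = inner x y)"

definition closed_op :: "'h::topological_space set \<Rightarrow> ('h \<Rightarrow> 'h) \<Rightarrow> bool" where
  "closed_op S T \<longleftrightarrow> closed {(x, T x) | x. x \<in> S}"

end

theory Submission
  imports Defs
begin

(* The graph of a selfadjoint operator D is the intersection, over x in its domain,
   of the closed sets where the adjoint relation with (x, D x) holds, so D is closed.
   The graph of M = W_L D W_R is the preimage of the graph of D under the continuous map
   (x, y) |-> (W_R x, W_L^-1 y); hence M is closed as well. *)

lemma closed_cinner_eq:
  fixes J :: "'h::real_inner \<Rightarrow> 'h"
  shows "closed {p::'h \<times> 'h. cinner J a (fst p) = cinner J b (snd p)}"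
proof -
  have "{p::'h \<times> 'h. cinner J a (fst p) = cinner J b (snd p)} =
      {p. inner a (fst p) = inner b (snd p)} \<inter> {p. inner (J a) (fst p) = inner (J b) (snd p)}"
    by (auto simp: cinner_def complex_eq_iff)
  then show ?thesis
    by (simp only:) (intro closed_Int closed_Collect_eq continuous_intros)
qed

lemma selfadjoint_op_closed:
  fixes J :: "'h::real_inner \<Rightarrow> 'h"
  assumes "selfadjoint_op J S T"
  shows "closed_op S T"
proof -
  have adj: "\<And>y z. (\<forall>x\<in>S. cinner J (T x) y = cinner J x z) \<longleftrightarrow> (y \<in> S \<and> z = T y)"
    using assms unfolding selfadjoint_op_def by blast
  have "{(x, T x) | x. x \<in> S} = (\<Inter>x\<in>S. {p. cinner J (T x) (fst p) = cinner J x (snd p)})"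
    by (simp only: set_eq_iff INT_iff mem_Collect_eq adj) auto
  then show ?thesis
    unfolding closed_op_def by (simp add: closed_INT closed_cinner_eq)
qed

lemma closed_op_compose_continuous:
  fixes A B T :: "'h::topological_space \<Rightarrow> 'h"
  assumes "closed_op S T"
    and "continuous_on UNIV A" and "bij B" and "continuous_on UNIV (inv B)"
  shows "closed_op {x. A x \<in> S} (\<lambda>x. B (T (A x)))"
proof -
  let ?f = "\<lambda>p. (A (fst p), inv B (snd p))"
  have cont: "continuous_on UNIV ?f"
    by (intro continuous_on_Pair continuous_on_compose2[OF assms(2)]
        continuous_on_compose2[OF assms(4)] continuous_intros) auto
  have "\<And>y z. inv B y = z \<longleftrightarrow> y = B z"
    using assms(3) by (metis bij_inv_eq_iff)
  then have graph: "{(x, B (T (A x))) | x. x \<in> {x. A x \<in> S}} = ?f -` {(x, T x) | x. x \<in> S}"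
    by auto
  show ?thesis
    using assms(1) unfolding closed_op_def graph by (rule closed_vimage[OF _ cont])
qed

theorem lemmaB1:
  fixes J :: "'h::{real_inner, complete_space} \<Rightarrow> 'h"
    and D0 :: "'h set" and D WL WR C :: "'h \<Rightarrow> 'h" and c :: real
  assumes "complex_structure J"
    and "selfadjoint_op J D0 D"
    and "bounded_selfadjoint J WL" and "bounded_selfadjoint J WR"
    and "\<forall>x. WL (WR x) = WR (WL x)"
    and "bij WL" and "bounded_linear (inv WL)"
    and "bij WR" and "bounded_linear (inv WR)"
    and "bounded_selfadjoint J (WR \<circ> inv WL)"
    and "c > 0" and "\<forall>x. c * (norm x)\<^sup>2 \<le> Re (cinner J x (WR (inv WL x)))"
    and "conjugation J C"
    and "C ` {x. WR x \<in> D0} = {x. WR x \<in> D0}"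
    and "\<forall>x\<in>{x. WR x \<in> D0}. C (WL (D (WR (C x)))) = - WL (D (WR x))"
  shows "closed_op {x. WR x \<in> D0} (\<lambda>x. WL (D (WR x)))"
proof -
  have "continuous_on UNIV WR"
    using assms(4) unfolding bounded_selfadjoint_def bounded_clinear_def
    by (blast intro: linear_continuous_on)
  moreover have "continuous_on UNIV (inv WL)"
    using assms(7) by (rule linear_continuous_on)
  ultimately show ?thesis
    by (rule closed_op_compose_continuous[OF selfadjoint_op_closed[OF assms(2)] _ assms(6)])
qed

end
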